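(* For every $n\ge1$, every $f\colon\mathbb F_2^n\to\mathbb R$, every $\epsilon> 0$ and every $\delta\in(0,1/2]$ such that $\xi:=\|f\|_2^2-\epsilon(1+2\delta)>0$, it holds that $\mathcal D^{\to,U}_{\epsilon}(f^+)\ge \frac{\delta}{2}\cdot\dim_{\xi}(f)$.
   Context: Fourier analysis: for $\alpha\in\mathbb F_2^n$ let $\chi_\alpha(x)=(-1)^{\sum_i\alpha_i x_i}$; $\hat f(\alpha)=\mathbb E_{x\sim U(\mathbb F_2^n)}[f(x)\chi_\alpha(x)]$; $\|f\|_2^2=\mathbb E_x[f(x)^2]$. Approximate Fourier dimension: for $\xi\in(0,\|f\|_2^2]$, $\dim_\xi(f)$ is the minimum $k$ such that there exists a linear subspace $A\subseteq\mathbb F_2^n$ of dimension $k$ with $\sum_{\alpha\in A}\hat f(\alpha)^2\ge\xi$. The XOR-function of $f$ is $f^+(x,y)=f(x+y)$ for $x,y\in\mathbb F_2^n$ (addition mod 2). Distributional one-way communication complexity under the uniform distribution: $\mathcal D^{\to,U}_\epsilon(f^+)$ is the minimum, over deterministic one-way protocols $\Pi$ in which Alice (holding $x$) sends a single message $M(x)$ to Bob (holding $y$) who then outputs a real number $\Pi(x,y)$ depending only on $M(x)$ and $y$, satisfying $\mathbb E_{x,y\sim U(\mathbb F_2^n)}[(\Pi(x,y)-f^+(x,y))^2]\le\epsilon$, of the maximum length in bits of Alice's message. *)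

theory Defs
  imports "HOL-Analysis.Analysis" "HOL-Library.Z2"
begin

text \<open>F_2^n is modelled as bit ^ 'n for a finite index type 'n (n = CARD('n) >= 1).\<close>

definition expect :: "(bit ^ 'n \<Rightarrow> real) \<Rightarrow> real" where
  "expect g = (\<Sum>x\<in>UNIV. g x) / real (card (UNIV :: (bit ^ 'n) set))"

definition chi :: "bit ^ 'n \<Rightarrow> bit ^ 'n \<Rightarrow> real" where
  "chi \<alpha> x = (if (\<Sum>i\<in>UNIV. \<alpha> $ i * x $ i) = 0 then 1 else -1)"

definition fourier :: "(bit ^ 'n \<Rightarrow> real) \<Rightarrow> bit ^ 'n \<Rightarrow> real" where
  "fourier f \<alpha> = expect (\<lambda>x. f x * chi \<alpha> x)"

definition norm2sq :: "(bit ^ 'n \<Rightarrow> real) \<Rightarrow> real" where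
  "norm2sq f = expect (\<lambda>x. (f x)^2)"

definition approx_fourier_dim :: "real \<Rightarrow> (bit ^ 'n \<Rightarrow> real) \<Rightarrow> nat" where
  "approx_fourier_dim \<xi> f = (LEAST k. \<exists>A :: (bit ^ 'n) set.
      vec.subspace A \<and> vec.dim A = k \<and> (\<Sum>\<alpha>\<in>A. (fourier f \<alpha>)^2) \<ge> \<xi>)"

text \<open>Distributional one-way communication complexity of f^+ under the uniform
  distribution: Alice sends M x (a bit string), Bob outputs B (M x) y.\<close>
definition oneway_cc :: "real \<Rightarrow> (bit ^ 'n \<Rightarrow> real) \<Rightarrow> nat" where
  "oneway_cc \<epsilon> f = (LEAST c. \<exists>(M :: bit ^ 'n \<Rightarrow> bool list) (B :: bool list \<Rightarrow> bit ^ 'n \<Rightarrow> real).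
      (\<forall>x. length (M x) \<le> c) \<and>
      expect (\<lambda>x. expect (\<lambda>y. (B (M x) y - f (x + y))^2)) \<le> \<epsilon>)"

end

theory Submission
  imports Defs
begin

text \<open>Take an optimal protocol. Given Alice's message \<open>m\<close>, Bob's best answer is the conditional
  mean, so the error is at least \<open>norm2sq f - \<Sum>\<^sub>a (fourier f a)\<^sup>2 w(a)\<close>, where \<open>w(a)\<close> is the weight of
  \<open>\<chi>\<^sub>a\<close> that survives conditioning on the message. Hence the frequencies with \<open>w(a) < 2\<delta>/(1+2\<delta>)\<close>
  carry at most \<open>\<epsilon>(1+2\<delta>)\<close> of the Fourier mass, and \<open>dim\<^sub>\<xi>(f)\<close> is bounded by the dimension of
  the span of the heavy frequencies. Conversely, the characters of a linearly independent set
  behave like independent signs, so an exponential-moment bound gives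
  \<open>\<Sum>\<^sub>a\<^sub>\<in>\<^sub>I \<bbbE>[\<chi>\<^sub>a | m]\<^sup>2 \<le> 2 ln (1 / Pr[m])\<close>; averaging over \<open>m\<close>, \<open>\<Sum>\<^sub>a\<^sub>\<in>\<^sub>I w(a)\<close> is at most twice
  the entropy of the message, i.e. at most \<open>2 ln #messages < 2 (c + 1) ln 2\<close>. Comparing the two
  bounds for a basis of the heavy frequencies gives the theorem.\<close>

section \<open>Characters and Parseval's identity\<close>

lemma UNIV_bit: "(UNIV :: bit set) = {0, 1}"
  by (auto intro: bit.exhaust)

instance bit :: finite
  by standard (simp add: UNIV_bit)

(* keep arithmetic on bit from being rewritten into bitwise operations *)
declare add_bit_eq_xor [simp del] mult_bit_eq_and [simp del]

lemma vec_bit_add_self [simp]: "(x :: bit ^ 'n) + x = 0"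
  by (simp add: vec_eq_iff)

lemma vec_bit_add_eq_0_iff: "(x :: bit ^ 'n) + y = 0 \<longleftrightarrow> x = y"
  by (metis add.assoc add_0 vec_bit_add_self)

lemma sum_translate: "(\<Sum>x\<in>UNIV. h (x + e)) = (\<Sum>x\<in>(UNIV :: (bit ^ 'n) set). h x)"
  by (rule sum.reindex_bij_witness[where i = "\<lambda>x. x + e" and j = "\<lambda>x. x + e"])
     (auto simp: add.assoc)

lemma card_vec_bit_pos: "0 < CARD(bit ^ 'n)"
  by (simp add: card_gt_0_iff)

lemma chi_commute: "chi a x = chi x a"
  unfolding chi_def by (simp add: mult.commute)

lemma chi_0_left [simp]: "chi 0 x = 1"
  by (simp add: chi_def)

lemma abs_chi [simp]: "\<bar>chi a x\<bar> = 1"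
  by (simp add: chi_def)

lemma chi_add: "chi a (x + y) = chi a x * chi a y"
proof -
  have sign_add: "(if u + v = 0 then 1 else -1) = (if u = 0 then 1 else -1) * (if v = 0 then (1::real) else -1)"
    for u v :: bit
    by (cases u; cases v) auto
  have "(\<Sum>i\<in>UNIV. a $ i * (x + y) $ i) = (\<Sum>i\<in>UNIV. a $ i * x $ i) + (\<Sum>i\<in>UNIV. a $ i * y $ i)"
    by (simp add: distrib_left sum.distrib)
  then show ?thesis
    unfolding chi_def by (simp only: sign_add)
qed

lemma chi_add_left: "chi (a + b) x = chi a x * chi b x"
  by (metis chi_commute chi_add)

lemma chi_sum_left: "finite T \<Longrightarrow> (\<Prod>a\<in>T. chi a x) = chi (\<Sum>a\<in>T. a) x"
  by (induction T rule: finite_induct) (auto simp: chi_add_left)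

lemma sum_chi: "(\<Sum>x\<in>UNIV. chi a (x :: bit ^ 'n)) = (if a = 0 then real CARD(bit ^ 'n) else 0)"
proof (cases "a = 0")
  case False
  then obtain i where "a $ i = 1"
    by (auto simp: vec_eq_iff)
  then have "(\<Sum>j\<in>UNIV. a $ j * axis i 1 $ j) = 1"
    by (simp add: axis_def if_distrib cong: if_cong)
  then have flip: "chi a (axis i 1) = -1"
    by (simp add: chi_def)
  have "(\<Sum>x\<in>UNIV. chi a x) = (\<Sum>x\<in>UNIV. chi a (x + axis i 1))"
    by (rule sum_translate [symmetric])
  also have "\<dots> = - (\<Sum>x\<in>UNIV. chi a x)"
    by (simp add: chi_add flip sum_negf)
  finally show ?thesis
    using False by simp
qed simp

lemma sum_chi_mult_chi:
  "(\<Sum>x\<in>UNIV. chi a (x :: bit ^ 'n) * chi b x) = (if a = b then real CARD(bit ^ 'n) else 0)"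
  by (simp add: chi_add_left [symmetric] sum_chi vec_bit_add_eq_0_iff)

lemma sum_square_chi_expansion:
  "(\<Sum>y\<in>UNIV. (\<Sum>a\<in>UNIV. c a * chi a (y :: bit ^ 'n))^2) = real CARD(bit ^ 'n) * (\<Sum>a\<in>UNIV. (c a)^2)"
proof -
  have "(\<Sum>y\<in>UNIV. (\<Sum>a\<in>UNIV. c a * chi a (y :: bit ^ 'n))^2)
      = (\<Sum>y\<in>UNIV. \<Sum>a\<in>UNIV. \<Sum>b\<in>UNIV. c a * c b * (chi a y * chi b y))"
    by (simp add: power2_eq_square sum_product algebra_simps)
  also have "\<dots> = (\<Sum>a\<in>UNIV. \<Sum>b\<in>UNIV. \<Sum>y\<in>UNIV. c a * c b * (chi a y * chi b y))"
    by (subst sum.swap) (rule sum.cong [OF refl], rule sum.swap)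
  also have "\<dots> = real CARD(bit ^ 'n) * (\<Sum>a\<in>UNIV. (c a)^2)"
    by (simp add: sum_distrib_left [symmetric] sum_chi_mult_chi if_distrib power2_eq_square cong: if_cong)
       (simp add: sum_distrib_left mult_ac)
  finally show ?thesis .
qed

lemma fourier_inversion: "f z = (\<Sum>a\<in>UNIV. fourier f a * chi a (z :: bit ^ 'n))"
proof -
  have dual: "(\<Sum>a\<in>UNIV. chi a x * chi a z) = (if x = z then real CARD(bit ^ 'n) else 0)" for x
    by (simp only: chi_commute [of _ x] chi_commute [of _ z] sum_chi_mult_chi)
  have "(\<Sum>a\<in>UNIV. fourier f a * chi a z)
      = (\<Sum>a\<in>UNIV. \<Sum>x\<in>UNIV. f x * (chi a x * chi a z)) / real CARD(bit ^ 'n)"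
    unfolding fourier_def expect_def
    by (simp add: sum_divide_distrib sum_distrib_right mult.assoc)
  also have "\<dots> = (\<Sum>x\<in>UNIV. f x * (\<Sum>a\<in>UNIV. chi a x * chi a z)) / real CARD(bit ^ 'n)"
    by (subst sum.swap) (simp add: sum_distrib_left)
  also have "\<dots> = f z"
    using card_vec_bit_pos [where 'n = 'n] by (simp add: dual if_distrib cong: if_cong)
  finally show ?thesis ..
qed

lemma parseval: "norm2sq (f :: bit ^ 'n \<Rightarrow> real) = (\<Sum>a\<in>UNIV. (fourier f a)^2)"
  unfolding norm2sq_def expect_def
  using card_vec_bit_pos [where 'n = 'n]
  by (subst fourier_inversion [of f]) (simp add: sum_square_chi_expansion)

section \<open>The error of a one-way protocol\<close>

lemma sum_square_deviation_ge:
  fixes g :: "'a \<Rightarrow> real"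
  assumes "finite S" "S \<noteq> {}"
  shows "(\<Sum>x\<in>S. (g x)^2) - (\<Sum>x\<in>S. g x)^2 / real (card S) \<le> (\<Sum>x\<in>S. (b - g x)^2)"
proof -
  define k where "k = real (card S)"
  define G where "G = (\<Sum>x\<in>S. g x)"
  have k: "0 < k"
    using assms by (simp add: k_def card_gt_0_iff)
  have "(\<Sum>x\<in>S. (b - g x)^2) = k * b^2 - 2 * b * G + (\<Sum>x\<in>S. (g x)^2)"
    by (simp add: power2_diff sum.distrib sum_subtractf sum_distrib_left k_def G_def)
  moreover have "k * b^2 - 2 * b * G + G^2 / k = (k * b - G)^2 / k"
    using k by (simp add: field_simps power2_eq_square)
  moreover have "0 \<le> (k * b - G)^2 / k"
    using k by simp
  ultimately show ?thesis
    unfolding k_def [symmetric] G_def [symmetric] by linarith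
qed

lemma sum_square_sum_translates:
  "(\<Sum>y\<in>UNIV. (\<Sum>x\<in>S. f (x + y))^2)
    = real CARD(bit ^ 'n) * (\<Sum>a\<in>UNIV. (fourier f a)^2 * (\<Sum>x\<in>S. chi a (x :: bit ^ 'n))^2)"
proof -
  have "(\<Sum>x\<in>S. f (x + y)) = (\<Sum>a\<in>UNIV. (fourier f a * (\<Sum>x\<in>S. chi a x)) * chi a y)" for y
  proof -
    have "(\<Sum>x\<in>S. f (x + y)) = (\<Sum>x\<in>S. \<Sum>a\<in>UNIV. fourier f a * chi a x * chi a y)"
      by (subst fourier_inversion [of f]) (simp add: chi_add mult.assoc)
    also have "\<dots> = (\<Sum>a\<in>UNIV. \<Sum>x\<in>S. fourier f a * chi a x * chi a y)"
      by (rule sum.swap)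
    finally show ?thesis
      by (simp add: sum_distrib_left sum_distrib_right)
  qed
  then show ?thesis
    by (simp add: sum_square_chi_expansion power_mult_distrib)
qed

text \<open>\<open>protocol_weight M a = \<Sum>\<^sub>m Pr[M x = m] \<cdot> \<bbbE>[\<chi>\<^sub>a(x) | M x = m]\<^sup>2\<close>, the weight \<open>w(a)\<close> above.\<close>
definition protocol_weight :: "(bit ^ 'n \<Rightarrow> 'm) \<Rightarrow> bit ^ 'n \<Rightarrow> real" where
  "protocol_weight M a =
    (\<Sum>m\<in>range M. (\<Sum>x | M x = m. chi a x)^2 / (real CARD(bit ^ 'n) * real (card {x. M x = m})))"

lemma sum_square_fibre_sums:
  fixes M :: "bit ^ 'n \<Rightarrow> 'm" and f :: "bit ^ 'n \<Rightarrow> real"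
  shows "(\<Sum>y\<in>UNIV. \<Sum>m\<in>range M. (\<Sum>x | M x = m. f (x + y))^2 / real (card {x. M x = m}))
      = real CARD(bit ^ 'n)^2 * (\<Sum>a\<in>UNIV. (fourier f a)^2 * protocol_weight M a)"
proof -
  let ?N = "real CARD(bit ^ 'n)"
  have N: "0 < ?N"
    using card_vec_bit_pos by simp
  have "(\<Sum>y\<in>UNIV. \<Sum>m\<in>range M. (\<Sum>x | M x = m. f (x + y))^2 / real (card {x. M x = m}))
      = (\<Sum>m\<in>range M. (\<Sum>y\<in>UNIV. (\<Sum>x | M x = m. f (x + y))^2) / real (card {x. M x = m}))"
    by (subst sum.swap) (simp add: sum_divide_distrib)
  also have "\<dots> = (\<Sum>m\<in>range M.
      ?N * (\<Sum>a\<in>UNIV. (fourier f a)^2 * (\<Sum>x | M x = m. chi a x)^2) / real (card {x. M x = m}))"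
    by (simp only: sum_square_sum_translates)
  also have "\<dots> = (\<Sum>m\<in>range M. \<Sum>a\<in>UNIV.
      ?N^2 * ((fourier f a)^2 * ((\<Sum>x | M x = m. chi a x)^2 / (?N * real (card {x. M x = m})))))"
    using N by (simp add: sum_distrib_left sum_divide_distrib power2_eq_square field_simps)
  also have "\<dots> = ?N^2 * (\<Sum>a\<in>UNIV. (fourier f a)^2 * protocol_weight M a)"
    by (subst sum.swap) (simp add: protocol_weight_def sum_distrib_left)
  finally show ?thesis .
qed

lemma protocol_error_ge:
  fixes M :: "bit ^ 'n \<Rightarrow> 'm" and f :: "bit ^ 'n \<Rightarrow> real"
  shows "norm2sq f - (\<Sum>a\<in>UNIV. (fourier f a)^2 * protocol_weight M a)
    \<le> expect (\<lambda>x. expect (\<lambda>y. (B (M x) y - f (x + y))^2))"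
proof -
  let ?N = "real CARD(bit ^ 'n)"
  have N: "0 < ?N"
    using card_vec_bit_pos by simp
  have fibres: "(\<Sum>x\<in>UNIV. h x) = (\<Sum>m\<in>range M. \<Sum>x | M x = m. h x)" for h :: "bit ^ 'n \<Rightarrow> real"
    using sum.image_gen [of "UNIV :: (bit ^ 'n) set" h M] by simp
  have energy: "(\<Sum>y\<in>UNIV. \<Sum>m\<in>range M. \<Sum>x | M x = m. (f (x + y))^2) = ?N^2 * norm2sq f"
  proof -
    have "(\<Sum>y\<in>UNIV. \<Sum>m\<in>range M. \<Sum>x | M x = m. (f (x + y))^2) = (\<Sum>y\<in>UNIV. \<Sum>x\<in>UNIV. (f (x + y))^2)"
      by (rule sum.cong [OF refl]) (simp only: fibres)
    also have "\<dots> = (\<Sum>y\<in>(UNIV :: (bit ^ 'n) set). \<Sum>x\<in>UNIV. (f x)^2)"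
      by (rule sum.cong [OF refl], rule sum_translate)
    also have "\<dots> = ?N^2 * norm2sq f"
      using N by (simp add: norm2sq_def expect_def power2_eq_square)
    finally show ?thesis .
  qed
  have "?N^2 * (norm2sq f - (\<Sum>a\<in>UNIV. (fourier f a)^2 * protocol_weight M a))
      = (\<Sum>y\<in>UNIV. \<Sum>m\<in>range M. (\<Sum>x | M x = m. (f (x + y))^2)
          - (\<Sum>x | M x = m. f (x + y))^2 / real (card {x. M x = m}))"
    by (simp add: right_diff_distrib energy sum_square_fibre_sums sum_subtractf)
  also have "\<dots> \<le> (\<Sum>y\<in>UNIV. \<Sum>m\<in>range M. \<Sum>x | M x = m. (B m y - f (x + y))^2)"
    by (intro sum_mono sum_square_deviation_ge) auto
  also have "\<dots> = (\<Sum>y\<in>UNIV. \<Sum>x\<in>UNIV. (B (M x) y - f (x + y))^2)"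
    by (rule sum.cong [OF refl], subst fibres, rule sum.cong [OF refl], rule sum.cong) auto
  also have "\<dots> = ?N^2 * expect (\<lambda>x. expect (\<lambda>y. (B (M x) y - f (x + y))^2))"
    using N by (subst sum.swap) (simp add: expect_def sum_divide_distrib [symmetric] power2_eq_square)
  finally show ?thesis
    using N by simp
qed

section \<open>Exponential moments of independent characters\<close>

lemma sinh_le_mult_cosh:
  fixes x :: real
  assumes "0 \<le> x"
  shows "sinh x \<le> x * cosh x"
proof -
  have deriv: "((\<lambda>t. t * cosh t - sinh t) has_real_derivative t * sinh t) (at t)" for t :: real
    by (rule derivative_eq_intros refl | simp)+
  have "0 \<le> t * sinh t" if "0 \<le> t" for t :: real
    using that by simp
  with deriv have "0 * cosh 0 - sinh (0 :: real) \<le> x * cosh x - sinh x"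
    by (intro DERIV_nonneg_imp_nondecreasing [OF assms]) blast
  then show ?thesis
    by simp
qed

lemma ln_cosh_le:
  fixes x :: real
  assumes "0 \<le> x"
  shows "ln (cosh x) \<le> x^2 / 2"
proof -
  have deriv: "((\<lambda>t. t^2 / 2 - ln (cosh t)) has_real_derivative t - sinh t / cosh t) (at t)" for t :: real
    by (rule derivative_eq_intros refl | simp)+
  have "0 \<le> t - sinh t / cosh t" if "0 \<le> t" for t :: real
    using sinh_le_mult_cosh [OF that] by (simp add: divide_le_eq)
  with deriv have "0^2 / 2 - ln (cosh (0 :: real)) \<le> x^2 / 2 - ln (cosh x)"
    by (intro DERIV_nonneg_imp_nondecreasing [OF assms]) blast
  then show ?thesis
    by simp
qed

lemma cosh_le_exp_half_square: "cosh (x :: real) \<le> exp (x^2 / 2)"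
proof -
  have "ln (cosh x) \<le> x^2 / 2"
    using ln_cosh_le [of "\<bar>x\<bar>"] by simp
  then show ?thesis
    by (metis cosh_real_pos exp_le_cancel_iff exp_ln)
qed

lemma card_mult_exp_mean_le_sum_exp:
  fixes g :: "'a \<Rightarrow> real"
  assumes "finite S"
  shows "real (card S) * exp ((\<Sum>x\<in>S. g x) / real (card S)) \<le> (\<Sum>x\<in>S. exp (g x))"
proof -
  define \<mu> where "\<mu> = (\<Sum>x\<in>S. g x) / real (card S)"
  have "exp \<mu> * (1 + (g x - \<mu>)) \<le> exp \<mu> * exp (g x - \<mu>)" for x
    by (intro mult_left_mono exp_ge_add_one_self) simp
  then have "exp \<mu> * (1 + (g x - \<mu>)) \<le> exp (g x)" for x
    by (simp add: exp_diff)
  then have "(\<Sum>x\<in>S. exp \<mu> * (1 + (g x - \<mu>))) \<le> (\<Sum>x\<in>S. exp (g x))"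
    by (rule sum_mono)
  moreover have "(\<Sum>x\<in>S. exp \<mu> * (1 + (g x - \<mu>))) = real (card S) * exp \<mu>"
    using assms by (cases "S = {}") (simp_all add: \<mu>_def sum_distrib_left [symmetric] sum.distrib sum_subtractf)
  ultimately show ?thesis
    by (simp add: \<mu>_def)
qed

lemma sum_independent_neq_0:
  fixes T :: "(bit ^ 'n) set"
  assumes "vec.independent I" "T \<subseteq> I" "T \<noteq> {}"
  shows "(\<Sum>a\<in>T. a) \<noteq> 0"
proof
  assume "(\<Sum>a\<in>T. a) = 0"
  then have "vec.dependent T"
    using assms(3) by (auto simp: vec.dependent_finite intro!: exI [of _ "\<lambda>_. 1"])
  then show False
    using assms(1,2) vec.dependent_mono by blast
qed

lemma exp_mult_chi: "exp (b * chi a x) = cosh b + chi a x * sinh b"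
  by (cases "chi a x = 1") (auto simp: chi_def cosh_plus_sinh [symmetric] cosh_minus_sinh [symmetric])

lemma sum_exp_independent_chi:
  fixes I :: "(bit ^ 'n) set"
  assumes "vec.independent I"
  shows "(\<Sum>x\<in>UNIV. exp (\<Sum>a\<in>I. b a * chi a x)) = real CARD(bit ^ 'n) * (\<Prod>a\<in>I. cosh (b a))"
proof -
  let ?term = "\<lambda>T. (\<Prod>a\<in>T. sinh (b a)) * (\<Prod>a\<in>I - T. cosh (b a))"
  have "(\<Sum>x\<in>UNIV. exp (\<Sum>a\<in>I. b a * chi a x)) = (\<Sum>x\<in>UNIV. \<Prod>a\<in>I. chi a x * sinh (b a) + cosh (b a))"
    by (simp add: exp_sum exp_mult_chi add.commute)
  also have "\<dots> = (\<Sum>x\<in>UNIV. \<Sum>T\<in>Pow I. chi (\<Sum>a\<in>T. a) x * ?term T)"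
    by (simp add: prod_add prod.distrib chi_sum_left mult.assoc)
  also have "\<dots> = (\<Sum>T\<in>Pow I. (\<Sum>x\<in>UNIV. chi (\<Sum>a\<in>T. a) x) * ?term T)"
    by (subst sum.swap) (simp add: sum_distrib_right)
  also have "\<dots> = (\<Sum>T\<in>Pow I. if T = {} then real CARD(bit ^ 'n) * ?term T else 0)"
    using sum_independent_neq_0 [OF assms] by (intro sum.cong refl) (auto simp: sum_chi)
  also have "\<dots> = real CARD(bit ^ 'n) * (\<Prod>a\<in>I. cosh (b a))"
    by (subst sum.delta) auto
  finally show ?thesis .
qed

lemma sum_exp_independent_chi_le:
  fixes I :: "(bit ^ 'n) set"
  assumes "vec.independent I"
  shows "(\<Sum>x\<in>UNIV. exp (\<Sum>a\<in>I. b a * chi a x)) \<le> real CARD(bit ^ 'n) * exp ((\<Sum>a\<in>I. (b a)^2) / 2)"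
proof -
  have "(\<Prod>a\<in>I. cosh (b a)) \<le> (\<Prod>a\<in>I. exp ((b a)^2 / 2))"
    by (intro prod_mono conjI cosh_le_exp_half_square) (auto intro: order.trans [OF zero_le_one cosh_real_ge_1])
  also have "\<dots> = exp ((\<Sum>a\<in>I. (b a)^2) / 2)"
    by (simp add: exp_sum sum_divide_distrib)
  finally show ?thesis
    unfolding sum_exp_independent_chi [OF assms] by simp
qed

lemma sum_square_independent_chi_le:
  fixes I S :: "(bit ^ 'n) set"
  assumes ind: "vec.independent I" and "S \<noteq> {}"
  shows "(\<Sum>a\<in>I. (\<Sum>x\<in>S. chi a x)^2) \<le> 2 * real (card S)^2 * ln (real CARD(bit ^ 'n) / real (card S))"
proof -
  let ?N = "real CARD(bit ^ 'n)"
  define k where "k = real (card S)"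
  define b where "b a = (\<Sum>x\<in>S. chi a x) / k" for a
  define W where "W = (\<Sum>a\<in>I. (b a)^2)"
  \<comment> \<open>compare the exponential moment of \<open>\<Sum>\<^sub>a b a \<cdot> \<chi>\<^sub>a\<close> on \<open>S\<close> (Jensen, from below)
    with its moment on the whole space (independence, from above)\<close>
  have k: "0 < k"
    using \<open>S \<noteq> {}\<close> by (simp add: k_def card_gt_0_iff)
  have "k \<le> ?N"
    unfolding k_def by (intro of_nat_mono card_mono) auto
  have "(\<Sum>x\<in>S. \<Sum>a\<in>I. b a * chi a x) = (\<Sum>a\<in>I. b a * (\<Sum>x\<in>S. chi a x))"
    by (subst sum.swap) (simp add: sum_distrib_left sum_divide_distrib)
  also have "\<dots> = (\<Sum>a\<in>I. k * (b a)^2)"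
    using k by (intro sum.cong refl) (simp add: b_def power2_eq_square)
  also have "\<dots> = k * W"
    by (simp add: W_def sum_distrib_left)
  finally have mean: "(\<Sum>x\<in>S. \<Sum>a\<in>I. b a * chi a x) / k = W"
    using k by simp
  have "k * exp W \<le> (\<Sum>x\<in>S. exp (\<Sum>a\<in>I. b a * chi a x))"
    using card_mult_exp_mean_le_sum_exp [of S "\<lambda>x. \<Sum>a\<in>I. b a * chi a x"] by (simp add: k_def [symmetric] mean)
  also have "\<dots> \<le> (\<Sum>x\<in>UNIV. exp (\<Sum>a\<in>I. b a * chi a x))"
    by (rule sum_mono2) auto
  also have "\<dots> \<le> ?N * exp (W / 2)"
    unfolding W_def by (rule sum_exp_independent_chi_le [OF ind])
  finally have "k * exp (W / 2) * exp (W / 2) \<le> ?N * exp (W / 2)"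
    by (simp add: mult.assoc exp_add [symmetric])
  then have "exp (W / 2) \<le> ?N / k"
    using k by (simp add: field_simps)
  then have "W \<le> 2 * ln (?N / k)"
    using k \<open>k \<le> ?N\<close> by (subst (asm) ln_ge_iff [symmetric]) auto
  then have "k^2 * W \<le> k^2 * (2 * ln (?N / k))"
    by (intro mult_left_mono) auto
  moreover have "(\<Sum>a\<in>I. (\<Sum>x\<in>S. chi a x)^2) = k^2 * W"
    using k by (simp add: W_def b_def sum_distrib_left power_divide)
  ultimately show ?thesis
    by (simp add: k_def mult_ac)
qed

section \<open>Entropy and the weight of independent frequencies\<close>

lemma entropy_le_ln_card:
  fixes p :: "'a \<Rightarrow> real"
  assumes "finite S" and pos: "\<And>x. x \<in> S \<Longrightarrow> 0 < p x" and "(\<Sum>x\<in>S. p x) = 1"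
  shows "(\<Sum>x\<in>S. p x * ln (1 / p x)) \<le> ln (real (card S))"
proof -
  define K where "K = real (card S)"
  have "S \<noteq> {}"
    using assms(3) by auto
  then have K: "0 < K"
    using assms(1) by (simp add: K_def card_gt_0_iff)
  have "p x * ln (1 / (K * p x)) = p x * ln (1 / p x) - p x * ln K" if "x \<in> S" for x
    using K pos [OF that] by (simp add: ln_div ln_mult right_diff_distrib)
  then have "(\<Sum>x\<in>S. p x * ln (1 / p x)) - ln K = (\<Sum>x\<in>S. p x * ln (1 / (K * p x)))"
    using assms(3) by (simp add: sum_subtractf sum_distrib_right [symmetric])
  also have "\<dots> \<le> (\<Sum>x\<in>S. p x * (1 / (K * p x) - 1))"
    using K pos by (intro sum_mono mult_left_mono ln_le_minus_one) (auto intro: less_imp_le)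
  also have "\<dots> = (\<Sum>x\<in>S. 1 / K - p x)"
  proof (rule sum.cong [OF refl])
    fix x assume "x \<in> S"
    then have "0 < p x"
      by (rule pos)
    with K show "p x * (1 / (K * p x) - 1) = 1 / K - p x"
      by (simp add: field_simps)
  qed
  also have "\<dots> = 0"
    using K assms(3) by (simp add: sum_subtractf K_def)
  finally show ?thesis
    by (simp add: K_def)
qed

lemma sum_card_fibres:
  fixes M :: "'a :: finite \<Rightarrow> 'm"
  shows "(\<Sum>m\<in>range M. real (card {x. M x = m})) = real CARD('a)"
  using sum.image_gen [of "UNIV :: 'a set" "\<lambda>_. 1 :: real" M] by simp

lemma protocol_weight_le_1: "protocol_weight (M :: bit ^ 'n \<Rightarrow> 'm) a \<le> 1"
proof -
  let ?N = "real CARD(bit ^ 'n)"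
  have N: "0 < ?N"
    using card_vec_bit_pos by simp
  have "protocol_weight M a \<le> (\<Sum>m\<in>range M. real (card {x. M x = m}) / ?N)"
    unfolding protocol_weight_def
  proof (rule sum_mono)
    fix m assume "m \<in> range M"
    then have k: "0 < real (card {x. M x = m})"
      by (auto simp: card_gt_0_iff)
    have "\<bar>\<Sum>x | M x = m. chi a x\<bar> \<le> real (card {x. M x = m})"
      using sum_abs [of "chi a" "{x. M x = m}"] by simp
    then have "(\<Sum>x | M x = m. chi a x)^2 \<le> real (card {x. M x = m})^2"
      by (metis abs_ge_zero power2_abs power_mono)
    then show "(\<Sum>x | M x = m. chi a x)^2 / (?N * real (card {x. M x = m})) \<le> real (card {x. M x = m}) / ?N"
      using k N by (simp add: divide_le_eq power2_eq_square field_simps)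
  qed
  also have "\<dots> = 1"
    using N sum_card_fibres [of M] by (simp add: sum_divide_distrib [symmetric])
  finally show ?thesis .
qed

lemma sum_protocol_weight_independent_le:
  fixes M :: "bit ^ 'n \<Rightarrow> 'm"
  assumes "vec.independent I"
  shows "(\<Sum>a\<in>I. protocol_weight M a) \<le> 2 * ln (real (card (range M)))"
proof -
  let ?N = "real CARD(bit ^ 'n)"
  let ?k = "\<lambda>m. real (card {x. M x = m})"
  have N: "0 < ?N"
    using card_vec_bit_pos by simp
  have k: "0 < ?k m" if "m \<in> range M" for m
    using that by (auto simp: card_gt_0_iff)
  have entropy: "(\<Sum>m\<in>range M. ?k m / ?N * ln (1 / (?k m / ?N))) \<le> ln (real (card (range M)))"
    using N k sum_card_fibres [of M] by (intro entropy_le_ln_card) (auto simp: sum_divide_distrib [symmetric])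
  have "(\<Sum>a\<in>I. protocol_weight M a) = (\<Sum>m\<in>range M. (\<Sum>a\<in>I. (\<Sum>x | M x = m. chi a x)^2) / (?N * ?k m))"
    unfolding protocol_weight_def by (subst sum.swap) (simp add: sum_divide_distrib)
  also have "\<dots> \<le> (\<Sum>m\<in>range M. 2 * ?k m ^ 2 * ln (?N / ?k m) / (?N * ?k m))"
  proof (rule sum_mono)
    fix m assume "m \<in> range M"
    then show "(\<Sum>a\<in>I. (\<Sum>x | M x = m. chi a x)^2) / (?N * ?k m) \<le> 2 * ?k m ^ 2 * ln (?N / ?k m) / (?N * ?k m)"
      using sum_square_independent_chi_le [OF assms, of "{x. M x = m}"] N k
      by (intro divide_right_mono) auto
  qed
  also have "\<dots> = 2 * (\<Sum>m\<in>range M. ?k m / ?N * ln (1 / (?k m / ?N)))"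
    unfolding sum_distrib_left by (intro sum.cong refl) (simp add: power2_eq_square)
  also have "\<dots> \<le> 2 * ln (real (card (range M)))"
    using entropy by simp
  finally show ?thesis .
qed

lemma card_range_bounded_length_lt:
  fixes M :: "'a \<Rightarrow> bool list"
  assumes "\<And>x. length (M x) \<le> c"
  shows "card (range M) < 2 ^ (c + 1)"
proof -
  have "card (range M) \<le> card {xs. set xs \<subseteq> (UNIV :: bool set) \<and> length xs \<le> c}"
    using assms by (intro card_mono finite_lists_length_le) auto
  also have "\<dots> = (\<Sum>i\<le>c. 2 ^ i)"
    using card_lists_length_le [of "UNIV :: bool set" c] by simp
  also have "\<dots> < 2 ^ (c + 1)"
    by (induction c) auto
  finally show ?thesis .
qed

lemma exp_ge_power_taylor_quadratic:
  fixes x :: real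
  assumes "0 \<le> x"
  shows "(1 + x + x^2 / 2) ^ k \<le> exp (real k * x)"
  using assms by (simp add: exp_of_nat_mult power_mono exp_lower_Taylor_quadratic)

lemma three_le_exp: "3 \<le> exp (10 / 9 :: real)"
  using exp_ge_power_taylor_quadratic [of "5 / 18" 4] by (simp add: power2_eq_square power_divide)

lemma two_power_le_exp:
  assumes "3 \<le> c"
  shows "2 ^ (c + 1) \<le> exp (real c)"
  using assms
proof (induction c rule: dec_induct)
  case base
  show ?case
    using exp_ge_power_taylor_quadratic [of "3 / 4" 4] by (simp add: power2_eq_square power_divide)
next
  case (step c)
  have "2 \<le> exp (1 :: real)"
    using exp_ge_add_one_self [of 1] by simp
  then have "2 * 2 ^ (c + 1) \<le> exp 1 * exp (real c)"
    using step.IH by (intro mult_mono) auto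
  then show ?case
    by (simp add: exp_add [symmetric] add.commute)
qed

lemma card_le_exp:
  assumes "K < 2 ^ (c + 1)" and "c \<noteq> 1"
  shows "real K \<le> exp (real c)"
proof -
  have K: "real K + 1 \<le> 2 ^ (c + 1)"
    using assms(1) by (metis Suc_leI of_nat_Suc of_nat_le_iff of_nat_numeral of_nat_power add.commute)
  consider "c = 0" | "c = 2" | "3 \<le> c"
    using \<open>c \<noteq> 1\<close> by linarith
  then show ?thesis
  proof cases
    case 2
    have "7 \<le> exp (2 :: real)"
      using exp_ge_power_taylor_quadratic [of "1 / 3" 6] by (simp add: power2_eq_square power_divide)
    with K 2 show ?thesis
      by simp
  next
    case 3
    with K two_power_le_exp show ?thesis
      by fastforce
  qed (use K in simp)
qed

lemma length_bound_from_weight: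
  fixes d K c :: nat and \<delta> :: real
  assumes weight: "real d * (2 * \<delta> / (1 + 2 * \<delta>)) \<le> 2 * ln (real K)"
    and "0 < K" "K < 2 ^ (c + 1)" "0 < \<delta>" "\<delta> \<le> 1 / 2"
  shows "\<delta> / 2 * real d \<le> real c"
proof -
  have "real d * \<delta> \<le> (1 + 2 * \<delta>) * ln (real K)"
    using weight \<open>0 < \<delta>\<close> by (simp add: field_simps)
  have "0 \<le> ln (real K)"
    using \<open>0 < K\<close> by simp
  show ?thesis
  proof (cases "c = 1")
    \<comment> \<open>\<open>ln 3 > 1\<close>, so here \<open>ln K \<le> 10/9\<close> has to be combined with \<open>d \<le> 4\<close> or \<open>\<delta> \<le> 2/5\<close>\<close>
    case True
    then have "real K \<le> exp (10 / 9)"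
      using \<open>K < 2 ^ (c + 1)\<close> three_le_exp by simp
    then have "ln (real K) \<le> ln (exp (10 / 9))"
      using \<open>0 < K\<close> by (subst ln_le_cancel_iff) auto
    then have "ln (real K) \<le> 10 / 9"
      by simp
    then have "(1 + 2 * \<delta>) * ln (real K) \<le> (1 + 2 * \<delta>) * (10 / 9)"
      using \<open>0 < \<delta>\<close> by (intro mult_left_mono) auto
    then have "real d * \<delta> \<le> 2"
    proof (cases "d \<le> 4")
      case True
      then have "real d * \<delta> \<le> 4 * \<delta>"
        using \<open>0 < \<delta>\<close> by (intro mult_right_mono) auto
      then show ?thesis
        using \<open>\<delta> \<le> 1 / 2\<close> by linarith
    next
      case False
      then have "5 * \<delta> \<le> real d * \<delta>"
        using \<open>0 < \<delta>\<close> by (intro mult_right_mono) auto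
      then show ?thesis
        using \<open>real d * \<delta> \<le> (1 + 2 * \<delta>) * ln (real K)\<close> \<open>(1 + 2 * \<delta>) * ln (real K) \<le> (1 + 2 * \<delta>) * (10 / 9)\<close>
        by (simp add: algebra_simps)
    qed
    then show ?thesis
      using True by (simp add: mult.commute)
  next
    case False
    then have "ln (real K) \<le> ln (exp (real c))"
      using card_le_exp [OF \<open>K < 2 ^ (c + 1)\<close>] \<open>0 < K\<close> by (subst ln_le_cancel_iff) auto
    then have "ln (real K) \<le> real c"
      by simp
    moreover have "(1 + 2 * \<delta>) * ln (real K) \<le> 2 * ln (real K)"
      using \<open>\<delta> \<le> 1 / 2\<close> \<open>0 \<le> ln (real K)\<close> by (intro mult_right_mono) auto
    ultimately have "real d * \<delta> \<le> 2 * real c"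
      using \<open>real d * \<delta> \<le> (1 + 2 * \<delta>) * ln (real K)\<close> by linarith
    then show ?thesis
      by (simp add: mult.commute)
  qed
qed

lemma exists_injective_message:
  "\<exists>M :: bit ^ 'n \<Rightarrow> bool list. inj M"
proof -
  obtain ix :: "'n list" where "set ix = UNIV"
    using finite_list [of "UNIV :: 'n set"] by auto
  have "inj (\<lambda>x :: bit ^ 'n. map (\<lambda>i. x $ i = 1) ix)"
  proof (rule injI)
    fix x y :: "bit ^ 'n"
    assume "map (\<lambda>i. x $ i = 1) ix = map (\<lambda>i. y $ i = 1) ix"
    then have "\<forall>i\<in>set ix. (x $ i = 1) = (y $ i = 1)"
      by (simp only: map_eq_conv)
    then have same: "(x $ i = 1) = (y $ i = 1)" for i
      using \<open>set ix = UNIV\<close> by blast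
    have "x $ i = y $ i" for i
      using same [of i] by (cases "x $ i"; cases "y $ i") auto
    then show "x = y"
      by (simp add: vec_eq_iff)
  qed
  then show ?thesis
    by blast
qed

lemma oneway_cc_attained:
  fixes f :: "bit ^ 'n \<Rightarrow> real"
  assumes "0 \<le> \<epsilon>"
  obtains M :: "bit ^ 'n \<Rightarrow> bool list" and B :: "bool list \<Rightarrow> bit ^ 'n \<Rightarrow> real"
  where "\<And>x. length (M x) \<le> oneway_cc \<epsilon> f"
    and "expect (\<lambda>x. expect (\<lambda>y. (B (M x) y - f (x + y))^2)) \<le> \<epsilon>"
proof -
  obtain M :: "bit ^ 'n \<Rightarrow> bool list" where "inj M"
    using exists_injective_message by blast
  have "\<exists>c (M :: bit ^ 'n \<Rightarrow> bool list) B. (\<forall>x. length (M x) \<le> c) \<and>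
      expect (\<lambda>x. expect (\<lambda>y. (B (M x) y - f (x + y))^2)) \<le> \<epsilon>"
  proof (intro exI conjI)
    show "\<forall>x. length (M x) \<le> Max (length ` range M)"
      by simp
    show "expect (\<lambda>x. expect (\<lambda>y. ((\<lambda>m y. f (inv M m + y)) (M x) y - f (x + y))^2)) \<le> \<epsilon>"
      using \<open>inj M\<close> assms by (simp add: expect_def)
  qed
  from LeastI_ex [OF this] obtain M' :: "bit ^ 'n \<Rightarrow> bool list" and B'
    where "\<forall>x. length (M' x) \<le> oneway_cc \<epsilon> f"
      and "expect (\<lambda>x. expect (\<lambda>y. (B' (M' x) y - f (x + y))^2)) \<le> \<epsilon>"
    unfolding oneway_cc_def by blast
  then show ?thesis
    using that by blast
qed

lemma approx_fourier_dim_le: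
  assumes "vec.subspace A" and "\<xi> \<le> (\<Sum>a\<in>A. (fourier f a)^2)"
  shows "approx_fourier_dim \<xi> f \<le> vec.dim A"
  unfolding approx_fourier_dim_def using assms by (intro Least_le) blast

lemma fourier_mass_in_heavy_span:
  fixes M :: "bit ^ 'n \<Rightarrow> 'm" and f :: "bit ^ 'n \<Rightarrow> real"
  assumes err: "expect (\<lambda>x. expect (\<lambda>y. (B (M x) y - f (x + y))^2)) \<le> \<epsilon>" and "t < 1"
  shows "norm2sq f - \<epsilon> / (1 - t) \<le> (\<Sum>a\<in>vec.span {a. t \<le> protocol_weight M a}. (fourier f a)^2)"
proof -
  define V where "V = vec.span {a. t \<le> protocol_weight M a}"
  have light: "protocol_weight M a < t" if "a \<notin> V" for a
  proof -
    have "a \<notin> {a. t \<le> protocol_weight M a}"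
      using that vec.span_superset [of "{a. t \<le> protocol_weight M a}"] unfolding V_def by blast
    then show ?thesis
      by simp
  qed
  have "(\<Sum>a\<in>-V. (fourier f a)^2) * (1 - t) = (\<Sum>a\<in>-V. (fourier f a)^2 * (1 - t))"
    by (rule sum_distrib_right)
  also have "\<dots> \<le> (\<Sum>a\<in>-V. (fourier f a)^2 * (1 - protocol_weight M a))"
  proof (rule sum_mono)
    fix a assume "a \<in> -V"
    then have "protocol_weight M a \<le> t"
      using light by (simp add: less_imp_le)
    then show "(fourier f a)^2 * (1 - t) \<le> (fourier f a)^2 * (1 - protocol_weight M a)"
      by (intro mult_left_mono) auto
  qed
  also have "\<dots> \<le> (\<Sum>a\<in>UNIV. (fourier f a)^2 * (1 - protocol_weight M a))"
    by (intro sum_mono2 mult_nonneg_nonneg) (simp_all add: protocol_weight_le_1)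
  also have "\<dots> = norm2sq f - (\<Sum>a\<in>UNIV. (fourier f a)^2 * protocol_weight M a)"
    by (simp add: parseval right_diff_distrib sum_subtractf)
  also have "\<dots> \<le> \<epsilon>"
    using protocol_error_ge [of f M B] err by linarith
  finally have outside: "(\<Sum>a\<in>-V. (fourier f a)^2) \<le> \<epsilon> / (1 - t)"
    using \<open>t < 1\<close> by (simp add: field_simps)
  have "norm2sq f = (\<Sum>a\<in>V \<union> -V. (fourier f a)^2)"
    by (simp add: parseval)
  also have "\<dots> = (\<Sum>a\<in>V. (fourier f a)^2) + (\<Sum>a\<in>-V. (fourier f a)^2)"
    by (rule sum.union_disjoint) auto
  finally show ?thesis
    using outside unfolding V_def [symmetric] by linarith
qed

lemma dim_heavy_le:
  fixes M :: "bit ^ 'n \<Rightarrow> 'm"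
  shows "real (vec.dim {a. t \<le> protocol_weight M a}) * t \<le> 2 * ln (real (card (range M)))"
proof -
  obtain A where A: "A \<subseteq> {a. t \<le> protocol_weight M a}" "vec.independent A"
    "{a. t \<le> protocol_weight M a} \<subseteq> vec.span A" "card A = vec.dim {a. t \<le> protocol_weight M a}"
    by (rule vec.basis_exists)
  have "real (card A) * t = (\<Sum>a\<in>A. t)"
    by simp
  also have "\<dots> \<le> (\<Sum>a\<in>A. protocol_weight M a)"
    using A(1) by (intro sum_mono) auto
  also have "\<dots> \<le> 2 * ln (real (card (range M)))"
    by (rule sum_protocol_weight_independent_le [OF A(2)])
  finally show ?thesis
    by (simp only: A(4))
qed

theorem mainTheorem2:
  fixes f :: "bit ^ 'n \<Rightarrow> real" and \<epsilon> \<delta> :: real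
  assumes "\<epsilon> > 0" and "0 < \<delta>" and "\<delta> \<le> 1/2"
    and "norm2sq f - \<epsilon> * (1 + 2 * \<delta>) > 0"
  shows "real (oneway_cc \<epsilon> f) \<ge> \<delta> / 2 * real (approx_fourier_dim (norm2sq f - \<epsilon> * (1 + 2 * \<delta>)) f)"
proof -
  obtain M :: "bit ^ 'n \<Rightarrow> bool list" and B
    where len: "\<And>x. length (M x) \<le> oneway_cc \<epsilon> f"
      and err: "expect (\<lambda>x. expect (\<lambda>y. (B (M x) y - f (x + y))^2)) \<le> \<epsilon>"
    using oneway_cc_attained [of \<epsilon> f] assms(1) by auto
  define t where "t = 2 * \<delta> / (1 + 2 * \<delta>)"
  define P where "P = {a. t \<le> protocol_weight M a}"
  have "t < 1" and "\<epsilon> / (1 - t) = \<epsilon> * (1 + 2 * \<delta>)"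
    using assms(2) by (simp_all add: t_def field_simps)
  then have "norm2sq f - \<epsilon> * (1 + 2 * \<delta>) \<le> (\<Sum>a\<in>vec.span P. (fourier f a)^2)"
    using fourier_mass_in_heavy_span [where M = M and B = B, OF err \<open>t < 1\<close>] by (simp add: P_def)
  then have "approx_fourier_dim (norm2sq f - \<epsilon> * (1 + 2 * \<delta>)) f \<le> vec.dim P"
    using approx_fourier_dim_le [OF vec.subspace_span] by simp
  then have "\<delta> / 2 * real (approx_fourier_dim (norm2sq f - \<epsilon> * (1 + 2 * \<delta>)) f) \<le> \<delta> / 2 * real (vec.dim P)"
    using assms(2) by (intro mult_left_mono) auto
  also have "\<dots> \<le> real (oneway_cc \<epsilon> f)"
    using dim_heavy_le [of t M] card_range_bounded_length_lt [OF len] assms(2,3)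
    by (intro length_bound_from_weight) (auto simp: P_def t_def card_gt_0_iff)
  finally show ?thesis .
qed

end
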